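(* In the setting of the context, there exists at most one solution $\{x_J,x_q,\theta^*\}$ to the system of equations $$\begin{cases}\displaystyle\int_{\theta^*}^\infty\bigl(1-G(u\mid x_J)\bigr)\,du=\frac{\theta^*\tau}{1-\tau},\\[2mm] \displaystyle(c_r(1-\tau)-1)x_q+(1-\tau)\Bigl(R_e+\int_0^{\theta^*}G(u\mid x_q)\,du\Bigr)=0,\\[2mm] \displaystyle\int_{x_J}^{x_q}J_{\theta^*}(u,0)\,dF(u)+\int_{x_q}^\infty(u-\theta^* )\,dF(u)=\frac{\theta^*\tau}{p_s},\end{cases}$$ where $J_{\theta}(x,0)=(1-\tau)\int_{(\theta,\infty)}(y-\theta)\,G(dy\mid x)-\theta\tau$.
   Context: Parameters: $p_s\in(0,1)$, $\tau\in(0,1)$, $c_r>0$, $R_e>0$. $F$ is the cdf of an exponential random variable $R^{(1)}$ with mean $E[R^{(1)}]>0$ (the first-level rate estimate). For $x\ge0$, $G(\cdot\mid x)$ is the cdf of $|\sqrt{c_rx}+z|^2$, where $z$ is a circularly symmetric complex Gaussian with $E|z|^2=R_e$ (the conditional distribution of the refined second-level rate estimate given first-level estimate $x$). The unknowns are $x_J,x_q\ge0$ and $\theta^*>0$. *)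

theory Defs
  imports "HOL-Probability.Probability"
begin

text \<open>Circularly symmetric complex Gaussian with E|z|^2 = Rv (= R_e): density exp(-|z|^2/Rv)/(pi Rv)
  w.r.t. Lebesgue measure on the complex plane.\<close>
definition cgauss :: "real \<Rightarrow> complex measure" where
  "cgauss Rv = density lborel (\<lambda>z. ennreal (exp (- (cmod z)\<^sup>2 / Rv) / (pi * Rv)))"

definition Gmeas :: "real \<Rightarrow> real \<Rightarrow> real \<Rightarrow> real measure" where
  "Gmeas cr Rv x = distr (cgauss Rv) borel (\<lambda>z. (cmod (complex_of_real (sqrt (cr * x)) + z))\<^sup>2)"

definition Gcdf :: "real \<Rightarrow> real \<Rightarrow> real \<Rightarrow> real \<Rightarrow> real" where
  "Gcdf cr Rv u x = measure (Gmeas cr Rv x) {..u}"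

definition Jfun :: "real \<Rightarrow> real \<Rightarrow> real \<Rightarrow> real \<Rightarrow> real \<Rightarrow> real" where
  "Jfun cr Rv tau theta x =
     (1 - tau) * (\<integral>y\<in>{theta<..}. (y - theta) \<partial>(Gmeas cr Rv x)) - theta * tau"

definition Fdens :: "real \<Rightarrow> real \<Rightarrow> real" where
  "Fdens m u = exponential_density (1 / m) u"

definition is_solution ::
  "real \<Rightarrow> real \<Rightarrow> real \<Rightarrow> real \<Rightarrow> real \<Rightarrow> real \<Rightarrow> real \<Rightarrow> real \<Rightarrow> bool" where
  "is_solution ps tau cr Rv m xJ xq theta \<longleftrightarrow>
     xJ \<ge> 0 \<and> xq \<ge> 0 \<and> theta > 0 \<and>
     (LINT u:{theta..}|lborel. 1 - Gcdf cr Rv u xJ) = theta * tau / (1 - tau) \<and>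
     (cr * (1 - tau) - 1) * xq + (1 - tau) * (Rv + (LINT u:{0..theta}|lborel. Gcdf cr Rv u xq)) = 0 \<and>
     (LBINT u = ereal xJ..ereal xq. Jfun cr Rv tau theta u * Fdens m u)
       + (LINT u:{xq..}|lborel. (u - theta) * Fdens m u) = theta * tau / ps"

end

theory Submission
  imports Defs
begin

text \<open>Write \<open>U(x, \<theta>) = E (y - \<theta>)\<^sup>+\<close> and \<open>L(x, \<theta>) = E (\<theta> - y)\<^sup>+\<close> for \<open>y \<sim> G(\<cdot> | x)\<close>.
  By the layer-cake formula the first equation says \<open>J\<^sub>\<theta>(x\<^sub>J, 0) = 0\<close>, and, by put-call parity, the
  second says that the surplus \<open>S\<^sub>\<theta>(x) = x - \<theta> - J\<^sub>\<theta>(x, 0) = (1 - (1 - \<tau>) c\<^sub>r) x - (1 - \<tau>) (R\<^sub>e + L(x, \<theta>))\<close>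
  vanishes at \<open>x\<^sub>q\<close>, which forces \<open>1 - (1 - \<tau>) c\<^sub>r > 0\<close>. Since \<open>G(\<cdot> | x)\<close> is stochastically strictly
  increasing in \<open>x\<close> (a Gaussian puts less mass on a disc the farther the disc is from its mean), both
  \<open>J\<^sub>\<theta>(\<cdot>, 0)\<close> and \<open>S\<^sub>\<theta>\<close> are strictly increasing. Hence the integrand of the third equation is
  \<open>(J\<^sub>\<theta>\<^sup>+ + S\<^sub>\<theta>\<^sup>+) dF\<close>, which no longer involves \<open>x\<^sub>J, x\<^sub>q\<close> and is antitone in \<open>\<theta>\<close>, while the
  right-hand side \<open>\<theta> \<tau> / p\<^sub>s\<close> is strictly increasing: \<open>\<theta>\<^sup>*\<close> is unique, and then so are \<open>x\<^sub>J\<close> and \<open>x\<^sub>q\<close>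
  as the zeros of strictly increasing functions.\<close>

section \<open>The complex Gaussian\<close>

lemma lborel_complex_eq_distr_Complex:
  "(lborel :: complex measure) = distr (lborel \<Otimes>\<^sub>M lborel) borel (\<lambda>(s, t). Complex s t)"
proof (rule lborel_eqI)
  fix l u :: complex
  assume le: "\<And>b. b \<in> Basis \<Longrightarrow> l \<bullet> b \<le> u \<bullet> b"
  have "Re l \<le> Re u" "Im l \<le> Im u"
    using le[of 1] le[of \<i>] by (auto simp: inner_complex_def)
  moreover have "(\<lambda>(s, t). Complex s t) -` box l u \<inter> space (lborel \<Otimes>\<^sub>M lborel)
      = {Re l<..<Re u} \<times> {Im l<..<Im u}"
    by (auto simp: box_def Basis_complex_def inner_complex_def space_pair_measure)
  moreover have "(\<lambda>(s, t). Complex s t) \<in> lborel \<Otimes>\<^sub>M lborel \<rightarrow>\<^sub>M (borel :: complex measure)"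
    by (simp add: Complex_eq[abs_def] case_prod_beta')
  ultimately show "emeasure (distr (lborel \<Otimes>\<^sub>M lborel) borel (\<lambda>(s, t). Complex s t)) (box l u)
      = (\<Prod>b\<in>Basis. (u - l) \<bullet> b)"
    by (simp add: emeasure_distr lborel.emeasure_pair_measure_Times Basis_complex_def
        inner_complex_def ennreal_mult)
qed simp

text \<open>Real and imaginary part of a sample of \<open>cgauss Rv\<close> are independent
  with variance \<open>Rv / 2\<close>.\<close>

abbreviation cgauss_coord :: "real \<Rightarrow> real \<Rightarrow> real" where
  "cgauss_coord Rv \<equiv> normal_density 0 (sqrt (Rv / 2))"

lemma cgauss_density_eq_product:
  assumes "0 < Rv"
  shows "exp (- ((cmod (Complex s t))\<^sup>2 / Rv)) / (pi * Rv) = cgauss_coord Rv s * cgauss_coord Rv t"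
proof -
  have "sqrt (2 * pi * (sqrt (Rv / 2))\<^sup>2) = sqrt (pi * Rv)" and "sqrt (pi * Rv) * sqrt (pi * Rv) = pi * Rv"
    using assms by simp_all
  then show ?thesis
    using assms by (simp add: cmod_def normal_density_def exp_add[symmetric] field_simps power2_eq_square)
qed

lemma nn_integral_cgauss:
  assumes "0 < Rv" and [measurable]: "g \<in> borel_measurable borel"
  shows "(\<integral>\<^sup>+z. g z \<partial>cgauss Rv) =
    (\<integral>\<^sup>+s. \<integral>\<^sup>+t. ennreal (cgauss_coord Rv s * cgauss_coord Rv t) * g (Complex s t) \<partial>lborel \<partial>lborel)"
proof -
  have m[measurable]: "(\<lambda>(s, t). Complex s t) \<in> lborel \<Otimes>\<^sub>M lborel \<rightarrow>\<^sub>M (borel :: complex measure)"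
    by (simp add: Complex_eq[abs_def] case_prod_beta')
  have "(\<integral>\<^sup>+z. g z \<partial>cgauss Rv) = (\<integral>\<^sup>+z. ennreal (exp (- (cmod z)\<^sup>2 / Rv) / (pi * Rv)) * g z \<partial>lborel)"
    unfolding cgauss_def by (subst nn_integral_density) auto
  also have "\<dots> = (\<integral>\<^sup>+p. ennreal (cgauss_coord Rv (fst p) * cgauss_coord Rv (snd p))
      * g (Complex (fst p) (snd p)) \<partial>lborel \<Otimes>\<^sub>M lborel)"
    by (subst lborel_complex_eq_distr_Complex, subst nn_integral_distr[OF m])
      (auto simp: cgauss_density_eq_product[OF assms(1)] split: prod.splits intro!: nn_integral_cong)
  also have "\<dots> = (\<integral>\<^sup>+s. \<integral>\<^sup>+t. ennreal (cgauss_coord Rv s * cgauss_coord Rv t) * g (Complex s t) \<partial>lborel \<partial>lborel)"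
    using m by (subst lborel.nn_integral_fst[symmetric]) (auto simp: case_prod_beta')
  finally show ?thesis .
qed

lemma nn_integral_cgauss_coord: "0 < Rv \<Longrightarrow> (\<integral>\<^sup>+s. ennreal (cgauss_coord Rv s) \<partial>lborel) = 1"
  by (subst nn_integral_eq_integral) auto

lemma prob_space_cgauss:
  assumes "0 < Rv" shows "prob_space (cgauss Rv)"
proof
  have "emeasure (cgauss Rv) (space (cgauss Rv)) = (\<integral>\<^sup>+z. 1 \<partial>cgauss Rv)"
    by simp
  also have "\<dots> = (\<integral>\<^sup>+s. ennreal (cgauss_coord Rv s) * (\<integral>\<^sup>+t. ennreal (cgauss_coord Rv t) \<partial>lborel) \<partial>lborel)"
    using assms by (subst nn_integral_cgauss) (simp_all add: ennreal_mult nn_integral_cmult)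
  also have "\<dots> = 1"
    using assms by (simp add: nn_integral_cgauss_coord)
  finally show "emeasure (cgauss Rv) (space (cgauss Rv)) = 1" .
qed

lemma cgauss_coord_second_moment:
  assumes "0 < Rv"
  shows "(\<integral>\<^sup>+s. ennreal (cgauss_coord Rv s * (a + s)\<^sup>2) \<partial>lborel) = ennreal (a\<^sup>2 + Rv / 2)"
proof -
  let ?\<phi> = "cgauss_coord Rv"
  have \<sigma>: "0 < sqrt (Rv / 2)" "(sqrt (Rv / 2))\<^sup>2 = Rv / 2"
    using assms by simp_all
  have "has_bochner_integral lborel ?\<phi> 1"
    using \<sigma>(1) by (simp add: has_bochner_integral_iff)
  moreover have "has_bochner_integral lborel (\<lambda>s. ?\<phi> s * s) 0"
    using normal_moment_nz_1[OF \<sigma>(1), of 0] by simp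
  moreover have "has_bochner_integral lborel (\<lambda>s. ?\<phi> s * s ^ 2) (Rv / 2)"
    using normal_moment_even[OF \<sigma>(1), of 0 1] \<sigma>(2) by simp
  ultimately have "has_bochner_integral lborel (\<lambda>s. a\<^sup>2 * ?\<phi> s + (2 * a) * (?\<phi> s * s) + ?\<phi> s * s ^ 2)
      (a\<^sup>2 * 1 + (2 * a) * 0 + Rv / 2)"
    by (intro has_bochner_integral_add has_bochner_integral_mult_right)
  moreover have "(\<lambda>s. a\<^sup>2 * ?\<phi> s + (2 * a) * (?\<phi> s * s) + ?\<phi> s * s ^ 2) = (\<lambda>s. ?\<phi> s * (a + s)\<^sup>2)"
    by (simp add: fun_eq_iff power2_eq_square algebra_simps)
  ultimately show ?thesis
    by (subst nn_integral_eq_integral) (auto simp: has_bochner_integral_iff)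
qed

lemma normal_density_zero_le_iff:
  assumes "0 < \<sigma>"
  shows "normal_density 0 \<sigma> x \<le> normal_density 0 \<sigma> y \<longleftrightarrow> y\<^sup>2 \<le> x\<^sup>2"
proof -
  have "\<not> pi * \<sigma>\<^sup>2 < 0" by (simp add: not_less)
  then show ?thesis using assms by (simp add: normal_density_def divide_le_cancel)
qed

lemma normal_density_zero_less_iff:
  assumes "0 < \<sigma>"
  shows "normal_density 0 \<sigma> x < normal_density 0 \<sigma> y \<longleftrightarrow> y\<^sup>2 < x\<^sup>2"
proof -
  have "\<not> pi * \<sigma>\<^sup>2 < 0" by (simp add: not_less)
  then show ?thesis using assms by (simp add: normal_density_def divide_less_cancel)
qed

lemma normal_density_shift_le:
  assumes "0 < \<sigma>" "0 \<le> w" "y \<le> w"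
  shows "normal_density 0 \<sigma> (y - 2 * w) \<le> normal_density 0 \<sigma> y"
proof -
  have "(y - 2 * w)\<^sup>2 - y\<^sup>2 = 4 * w * (w - y)"
    by (simp add: power2_eq_square algebra_simps)
  moreover have "0 \<le> 4 * w * (w - y)"
    using assms by simp
  ultimately have "y\<^sup>2 \<le> (y - 2 * w)\<^sup>2"
    by linarith
  then show ?thesis
    using assms by (simp add: normal_density_zero_le_iff)
qed

lemma normal_density_shift_less:
  assumes "0 < \<sigma>" "0 < w" "y < w"
  shows "normal_density 0 \<sigma> (y - 2 * w) < normal_density 0 \<sigma> y"
proof -
  have "(y - 2 * w)\<^sup>2 - y\<^sup>2 = 4 * w * (w - y)"
    by (simp add: power2_eq_square algebra_simps)
  moreover have "0 < 4 * w * (w - y)"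
    using assms by simp
  ultimately have "y\<^sup>2 < (y - 2 * w)\<^sup>2"
    by linarith
  then show ?thesis
    using assms by (simp add: normal_density_zero_less_iff)
qed

lemma not_AE_lborel_interval:
  fixes l r :: real
  assumes "l < r" "\<And>x. l < x \<Longrightarrow> x < r \<Longrightarrow> \<not> P x"
  shows "\<not> (AE x in lborel. P x)"
proof
  assume "AE x in lborel. P x"
  then have "AE x in lborel. x \<notin> {l<..<r}"
    by (rule AE_mp) (use assms(2) in auto)
  then have "emeasure lborel {l<..<r} = 0"
    by (subst (asm) AE_iff_measurable[of "{l<..<r}"]) auto
  with assms(1) show False by simp
qed

text \<open>On \<open>(a, b] \<subseteq> (-\<infinity>, w]\<close> the density exceeds its translate by \<open>2w\<close>.\<close>

lemma normal_translated_interval_le: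
  fixes \<sigma> w a b :: real
  defines "N \<equiv> density lborel (normal_density 0 \<sigma>)"
  assumes \<sigma>: "0 < \<sigma>" and w: "0 \<le> w" and ab: "a \<le> b" "b \<le> w"
  shows "measure N {a - 2 * w..<b - 2 * w} \<le> measure N {a<..b}"
    and "a < b \<Longrightarrow> 0 < w \<Longrightarrow> measure N {a - 2 * w..<b - 2 * w} < measure N {a<..b}"
proof -
  interpret N: prob_space N
    unfolding N_def using \<sigma> by (rule prob_space_normal_density)
  have emeasure_N: "emeasure N S = (\<integral>\<^sup>+x. ennreal (normal_density 0 \<sigma> x) * indicator S x \<partial>lborel)"
    if "S \<in> sets borel" for S
    unfolding N_def using that by (subst emeasure_density) auto
  define f where "f x = ennreal (normal_density 0 \<sigma> (x - 2 * w)) * indicator {a..<b} x" for x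
  define g where "g x = ennreal (normal_density 0 \<sigma> x) * indicator {a<..b} x" for x
  have [measurable]: "f \<in> borel_measurable borel" "g \<in> borel_measurable borel"
    unfolding f_def[abs_def] g_def[abs_def] by auto
  have f: "emeasure N {a - 2 * w..<b - 2 * w} = (\<integral>\<^sup>+x. f x \<partial>lborel)"
    using nn_integral_real_affine[of "\<lambda>x. ennreal (normal_density 0 \<sigma> x) * indicator {a - 2 * w..<b - 2 * w} x" 1 "-2 * w"]
    by (simp add: emeasure_N f_def indicator_def algebra_simps cong: if_cong)
  have g: "emeasure N {a<..b} = (\<integral>\<^sup>+x. g x \<partial>lborel)"
    unfolding g_def by (rule emeasure_N) auto
  have f_le_g: "AE x in lborel. f x \<le> g x"
    using AE_lborel_singleton[of a]
    by eventually_elim (use ab w \<sigma> normal_density_shift_le in \<open>auto simp: f_def g_def indicator_def\<close>)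
  have "emeasure N {a - 2 * w..<b - 2 * w} \<le> emeasure N {a<..b}"
    unfolding f g using f_le_g by (rule nn_integral_mono_AE)
  then show "measure N {a - 2 * w..<b - 2 * w} \<le> measure N {a<..b}"
    by (simp add: N.emeasure_eq_measure)
  assume lt: "a < b" "0 < w"
  have "(\<integral>\<^sup>+x. f x \<partial>lborel) < (\<integral>\<^sup>+x. g x \<partial>lborel)"
  proof (rule nn_integral_less)
    show "(\<integral>\<^sup>+x. f x \<partial>lborel) \<noteq> \<infinity>"
      using f N.emeasure_finite by (metis infinity_ennreal_def)
    show "\<not> (AE x in lborel. g x \<le> f x)"
    proof (rule not_AE_lborel_interval)
      fix x assume "a < x" "x < b"
      then show "\<not> g x \<le> f x"
        using ab lt \<sigma> normal_density_shift_less[of \<sigma> w x] by (auto simp: f_def g_def)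
    qed (use lt in auto)
  qed (use f_le_g in auto)
  then show "measure N {a - 2 * w..<b - 2 * w} < measure N {a<..b}"
    by (simp add: N.emeasure_eq_measure f[symmetric] g[symmetric] ennreal_less_iff)
qed

lemma normal_centred_interval_mono:
  fixes \<sigma> w c1 c2 :: real
  defines "N \<equiv> density lborel (normal_density 0 \<sigma>)"
  assumes \<sigma>: "0 < \<sigma>" and w: "0 \<le> w" and c: "c2 \<le> c1" "c1 \<le> 0"
  shows "measure N {c2 - w..c2 + w} \<le> measure N {c1 - w..c1 + w}"
    and "c2 < c1 \<Longrightarrow> 0 < w \<Longrightarrow> measure N {c2 - w..c2 + w} < measure N {c1 - w..c1 + w}"
proof -
  interpret N: prob_space N
    unfolding N_def using \<sigma> by (rule prob_space_normal_density)
  have "measure N {c2 - w..c1 + w} = measure N ({c2 - w..c2 + w} \<union> {c2 + w<..c1 + w})"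
    using c w by (intro arg_cong[where f = "measure N"]) auto
  also have "\<dots> = measure N {c2 - w..c2 + w} + measure N {c2 + w<..c1 + w}"
    by (rule N.finite_measure_Union) (auto simp: N_def)
  finally have left: "measure N {c2 - w..c1 + w} = measure N {c2 - w..c2 + w} + measure N {c2 + w<..c1 + w}" .
  have "measure N {c2 - w..c1 + w} = measure N ({c2 - w..<c1 - w} \<union> {c1 - w..c1 + w})"
    using c w by (intro arg_cong[where f = "measure N"]) auto
  also have "\<dots> = measure N {c2 - w..<c1 - w} + measure N {c1 - w..c1 + w}"
    by (rule N.finite_measure_Union) (auto simp: N_def)
  finally have right: "measure N {c2 - w..c1 + w} = measure N {c2 - w..<c1 - w} + measure N {c1 - w..c1 + w}" .
  have "{c2 + w - 2 * w..<c1 + w - 2 * w} = {c2 - w..<c1 - w}"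
    by auto
  then show "measure N {c2 - w..c2 + w} \<le> measure N {c1 - w..c1 + w}"
    and "c2 < c1 \<Longrightarrow> 0 < w \<Longrightarrow> measure N {c2 - w..c2 + w} < measure N {c1 - w..c1 + w}"
    using normal_translated_interval_le[OF \<sigma> w, of "c2 + w" "c1 + w"] c left right
    unfolding N_def by auto
qed

section \<open>The law \<open>G(\<cdot> | x)\<close>\<close>

lemma nn_integral_Gmeas:
  assumes "0 < Rv" and [measurable]: "g \<in> borel_measurable borel"
  shows "(\<integral>\<^sup>+y. g y \<partial>Gmeas cr Rv x) = (\<integral>\<^sup>+t. \<integral>\<^sup>+s.
    ennreal (cgauss_coord Rv s * cgauss_coord Rv t) * g ((sqrt (cr * x) + s)\<^sup>2 + t\<^sup>2) \<partial>lborel \<partial>lborel)"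
proof -
  have "(\<integral>\<^sup>+y. g y \<partial>Gmeas cr Rv x) = (\<integral>\<^sup>+z. g ((cmod (complex_of_real (sqrt (cr * x)) + z))\<^sup>2) \<partial>cgauss Rv)"
    unfolding Gmeas_def by (subst nn_integral_distr) (auto simp: cgauss_def)
  also have "\<dots> = (\<integral>\<^sup>+s. \<integral>\<^sup>+t. ennreal (cgauss_coord Rv s * cgauss_coord Rv t)
      * g ((sqrt (cr * x) + s)\<^sup>2 + t\<^sup>2) \<partial>lborel \<partial>lborel)"
    using assms by (subst nn_integral_cgauss) (auto simp: cmod_def)
  also have "\<dots> = (\<integral>\<^sup>+t. \<integral>\<^sup>+s. ennreal (cgauss_coord Rv s * cgauss_coord Rv t)
      * g ((sqrt (cr * x) + s)\<^sup>2 + t\<^sup>2) \<partial>lborel \<partial>lborel)"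
    by (rule lborel_pair.Fubini[symmetric, where f = "\<lambda>(s, t). ennreal (cgauss_coord Rv s * cgauss_coord Rv t)
      * g ((sqrt (cr * x) + s)\<^sup>2 + t\<^sup>2)", simplified])
  finally show ?thesis .
qed

lemma sets_Gmeas [simp, measurable_cong]: "sets (Gmeas cr Rv x) = sets borel"
  by (simp add: Gmeas_def)

lemma prob_space_Gmeas: "0 < Rv \<Longrightarrow> prob_space (Gmeas cr Rv x)"
  unfolding Gmeas_def
  by (rule prob_space.prob_space_distr[OF prob_space_cgauss]) (auto simp: cgauss_def)

lemma AE_Gmeas_nonneg: "AE y in Gmeas cr Rv x. 0 \<le> y"
  unfolding Gmeas_def by (subst AE_distr_iff) (auto simp: cgauss_def)

lemma nn_integral_Gmeas_id:
  assumes "0 < Rv" "0 \<le> cr" "0 \<le> x"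
  shows "(\<integral>\<^sup>+y. ennreal y \<partial>Gmeas cr Rv x) = ennreal (cr * x + Rv)"
proof -
  let ?\<phi> = "cgauss_coord Rv" and ?a = "sqrt (cr * x)"
  have moment: "(\<integral>\<^sup>+s. ennreal (?\<phi> s * (a + s)\<^sup>2) \<partial>lborel) = ennreal (a\<^sup>2 + Rv / 2)" for a
    using assms(1) by (rule cgauss_coord_second_moment)
  have split: "ennreal (?\<phi> s * ?\<phi> t) * ennreal ((?a + s)\<^sup>2 + t\<^sup>2)
      = ennreal (?\<phi> t) * ennreal (?\<phi> s * (?a + s)\<^sup>2) + ennreal (?\<phi> t * t\<^sup>2) * ennreal (?\<phi> s)" for s t
    by (simp add: ennreal_mult'[symmetric] ennreal_plus[symmetric] algebra_simps del: ennreal_plus)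
  have "(\<integral>\<^sup>+y. ennreal y \<partial>Gmeas cr Rv x) = (\<integral>\<^sup>+t. \<integral>\<^sup>+s.
      ennreal (?\<phi> t) * ennreal (?\<phi> s * (?a + s)\<^sup>2) + ennreal (?\<phi> t * t\<^sup>2) * ennreal (?\<phi> s) \<partial>lborel \<partial>lborel)"
    by (subst nn_integral_Gmeas[OF assms(1)]) (measurable, simp only: split)
  also have "\<dots> = (\<integral>\<^sup>+t. ennreal (?\<phi> t) * ennreal (?a\<^sup>2 + Rv / 2) + ennreal (?\<phi> t * t\<^sup>2) \<partial>lborel)"
    using assms(1) by (simp add: nn_integral_add nn_integral_cmult moment nn_integral_cgauss_coord)
  also have "\<dots> = ennreal (?a\<^sup>2 + Rv / 2) + ennreal (0\<^sup>2 + Rv / 2)"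
    using assms(1) moment[of 0]
    by (simp add: nn_integral_add nn_integral_multc nn_integral_cgauss_coord)
  also have "\<dots> = ennreal (cr * x + Rv)"
    using assms by (simp add: ennreal_plus[symmetric] del: ennreal_plus)
  finally show ?thesis .
qed

text \<open>The conditional cdf of \<open>G(\<cdot> | x)\<close> given \<open>Im z = t\<close>, where \<open>a = \<surd>(c\<^sub>r x)\<close>.\<close>

definition Gcdf_given_Im :: "real \<Rightarrow> real \<Rightarrow> real \<Rightarrow> real \<Rightarrow> ennreal" where
  "Gcdf_given_Im Rv u a t = (\<integral>\<^sup>+s. ennreal (cgauss_coord Rv s) * indicator {..u} ((a + s)\<^sup>2 + t\<^sup>2) \<partial>lborel)"

lemma Gcdf_given_Im_measurable [measurable]: "(\<lambda>t. Gcdf_given_Im Rv u a t) \<in> borel_measurable borel"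
  unfolding Gcdf_given_Im_def by measurable

lemma Gcdf_given_Im_eq_interval:
  assumes "t\<^sup>2 \<le> u"
  shows "Gcdf_given_Im Rv u a t
    = emeasure (density lborel (cgauss_coord Rv)) {-a - sqrt (u - t\<^sup>2)..-a + sqrt (u - t\<^sup>2)}"
proof -
  have "(a + s)\<^sup>2 + t\<^sup>2 \<le> u \<longleftrightarrow> s \<in> {-a - sqrt (u - t\<^sup>2)..-a + sqrt (u - t\<^sup>2)}" for s
  proof -
    have "(a + s)\<^sup>2 + t\<^sup>2 \<le> u \<longleftrightarrow> sqrt ((a + s)\<^sup>2) \<le> sqrt (u - t\<^sup>2)"
      by (subst real_sqrt_le_iff) auto
    then show ?thesis
      by (auto simp: abs_le_iff)
  qed
  then show ?thesis
    unfolding Gcdf_given_Im_def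
    by (subst emeasure_density) (auto simp: indicator_def intro!: nn_integral_cong)
qed

lemma Gcdf_given_Im_antimono:
  assumes "0 < Rv" "0 \<le> a1" "a1 \<le> a2"
  shows "Gcdf_given_Im Rv u a2 t \<le> Gcdf_given_Im Rv u a1 t"
    and "a1 < a2 \<Longrightarrow> t\<^sup>2 < u \<Longrightarrow> Gcdf_given_Im Rv u a2 t < Gcdf_given_Im Rv u a1 t"
proof -
  let ?N = "density lborel (cgauss_coord Rv)" and ?w = "sqrt (u - t\<^sup>2)"
  interpret N: prob_space ?N
    using assms(1) by (intro prob_space_normal_density) simp
  have \<sigma>: "0 < sqrt (Rv / 2)"
    using assms(1) by simp
  show "Gcdf_given_Im Rv u a2 t \<le> Gcdf_given_Im Rv u a1 t"
  proof (cases "t\<^sup>2 \<le> u")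
    case True
    then show ?thesis
      using normal_centred_interval_mono(1)[OF \<sigma>, of ?w "-a2" "-a1"] assms
      by (simp add: Gcdf_given_Im_eq_interval N.emeasure_eq_measure)
  next
    case False
    then have "\<not> (a2 + s)\<^sup>2 + t\<^sup>2 \<le> u" for s
      using zero_le_power2[of "a2 + s"] by linarith
    then show ?thesis
      by (simp add: Gcdf_given_Im_def)
  qed
  assume "a1 < a2" "t\<^sup>2 < u"
  then show "Gcdf_given_Im Rv u a2 t < Gcdf_given_Im Rv u a1 t"
    using normal_centred_interval_mono(2)[OF \<sigma>, of ?w "-a2" "-a1"] assms
    by (simp add: Gcdf_given_Im_eq_interval N.emeasure_eq_measure ennreal_less_iff)
qed

lemma emeasure_Gmeas_atMost:
  assumes "0 < Rv"
  shows "emeasure (Gmeas cr Rv x) {..u}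
    = (\<integral>\<^sup>+t. ennreal (cgauss_coord Rv t) * Gcdf_given_Im Rv u (sqrt (cr * x)) t \<partial>lborel)"
proof -
  have "emeasure (Gmeas cr Rv x) {..u} = (\<integral>\<^sup>+y. indicator {..u} y \<partial>Gmeas cr Rv x)"
    by simp
  also have "\<dots> = (\<integral>\<^sup>+t. \<integral>\<^sup>+s. ennreal (cgauss_coord Rv t)
      * (ennreal (cgauss_coord Rv s) * indicator {..u} ((sqrt (cr * x) + s)\<^sup>2 + t\<^sup>2)) \<partial>lborel \<partial>lborel)"
    using assms by (subst nn_integral_Gmeas) (auto simp: ennreal_mult mult_ac intro!: nn_integral_cong)
  also have "\<dots> = (\<integral>\<^sup>+t. ennreal (cgauss_coord Rv t) * Gcdf_given_Im Rv u (sqrt (cr * x)) t \<partial>lborel)"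
    unfolding Gcdf_given_Im_def by (subst nn_integral_cmult) auto
  finally show ?thesis .
qed

lemma Gcdf_antimono:
  assumes "0 < Rv" "0 < cr" "0 \<le> x1" "x1 \<le> x2"
  shows "Gcdf cr Rv u x2 \<le> Gcdf cr Rv u x1"
    and "x1 < x2 \<Longrightarrow> 0 < u \<Longrightarrow> Gcdf cr Rv u x2 < Gcdf cr Rv u x1"
proof -
  interpret G1: prob_space "Gmeas cr Rv x1" using assms(1) by (rule prob_space_Gmeas)
  interpret G2: prob_space "Gmeas cr Rv x2" using assms(1) by (rule prob_space_Gmeas)
  let ?g = "\<lambda>x t. ennreal (cgauss_coord Rv t) * Gcdf_given_Im Rv u (sqrt (cr * x)) t"
  have a: "0 \<le> sqrt (cr * x1)" "sqrt (cr * x1) \<le> sqrt (cr * x2)"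
    using assms by (auto intro!: mult_left_mono)
  have le: "?g x2 t \<le> ?g x1 t" for t
    by (intro mult_left_mono Gcdf_given_Im_antimono(1)[OF assms(1) a]) auto
  then have "emeasure (Gmeas cr Rv x2) {..u} \<le> emeasure (Gmeas cr Rv x1) {..u}"
    unfolding emeasure_Gmeas_atMost[OF assms(1)] by (intro nn_integral_mono)
  then show "Gcdf cr Rv u x2 \<le> Gcdf cr Rv u x1"
    unfolding Gcdf_def by (simp add: G1.emeasure_eq_measure G2.emeasure_eq_measure)
  assume lt: "x1 < x2" "0 < u"
  have "(\<integral>\<^sup>+t. ?g x2 t \<partial>lborel) < (\<integral>\<^sup>+t. ?g x1 t \<partial>lborel)"
  proof (rule nn_integral_less)
    show "(\<integral>\<^sup>+t. ?g x2 t \<partial>lborel) \<noteq> \<infinity>"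
      using G2.emeasure_finite[of "{..u}"] by (simp add: emeasure_Gmeas_atMost[OF assms(1)] infinity_ennreal_def)
    show "\<not> (AE t in lborel. ?g x1 t \<le> ?g x2 t)"
    proof (rule not_AE_lborel_interval)
      fix t assume "- sqrt u < t" "t < sqrt u"
      then have "sqrt (t\<^sup>2) < sqrt u"
        by auto
      then have "t\<^sup>2 < u"
        by (simp only: real_sqrt_less_iff)
      then have "Gcdf_given_Im Rv u (sqrt (cr * x2)) t < Gcdf_given_Im Rv u (sqrt (cr * x1)) t"
        using assms lt by (intro Gcdf_given_Im_antimono(2)[OF assms(1) a]) auto
      then show "\<not> ?g x1 t \<le> ?g x2 t"
        using normal_density_pos[of "sqrt (Rv / 2)" 0 t] assms(1)
        by (auto simp: not_le ennreal_mult_strict_left_mono)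
    qed (use lt in simp)
  qed (use le in auto)
  then show "Gcdf cr Rv u x2 < Gcdf cr Rv u x1"
    unfolding Gcdf_def emeasure_Gmeas_atMost[OF assms(1), symmetric]
    by (simp add: G1.emeasure_eq_measure G2.emeasure_eq_measure ennreal_less_iff)
qed

section \<open>Partial moments\<close>

definition upper_partial_moment :: "real measure \<Rightarrow> real \<Rightarrow> real" where
  "upper_partial_moment M \<theta> = enn2real (\<integral>\<^sup>+y. ennreal (y - \<theta>) \<partial>M)"

definition lower_partial_moment :: "real measure \<Rightarrow> real \<Rightarrow> real" where
  "lower_partial_moment M \<theta> = enn2real (\<integral>\<^sup>+y. ennreal (\<theta> - y) \<partial>M)"

lemma upper_partial_moment_nonneg [simp]: "0 \<le> upper_partial_moment M \<theta>"
  by (simp add: upper_partial_moment_def)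

lemma lower_partial_moment_nonneg [simp]: "0 \<le> lower_partial_moment M \<theta>"
  by (simp add: lower_partial_moment_def)

lemma nn_integral_pos_part_layer_cake:
  fixes M :: "real measure"
  assumes "sigma_finite_measure M" and sets_eq [measurable_cong]: "sets M = sets borel"
  shows "(\<integral>\<^sup>+y. ennreal (y - \<theta>) \<partial>M) = (\<integral>\<^sup>+u. indicator {\<theta>..} u * emeasure M {u<..} \<partial>lborel)"
proof -
  interpret sigma_finite_measure M by fact
  interpret P: pair_sigma_finite lborel M ..
  have "(\<lambda>(u, y). indicator {\<theta>..} u * indicator {u<..} y :: ennreal) \<in> borel_measurable (lborel \<Otimes>\<^sub>M M)"
    by (simp add: indicator_def case_prod_beta')
  then have "(\<integral>\<^sup>+u. \<integral>\<^sup>+y. indicator {\<theta>..} u * indicator {u<..} y \<partial>M \<partial>lborel)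
      = (\<integral>\<^sup>+y. \<integral>\<^sup>+u. indicator {\<theta>..} u * indicator {u<..} y \<partial>lborel \<partial>M)"
    by (rule P.Fubini[symmetric, where f = "\<lambda>(u, y). indicator {\<theta>..} u * indicator {u<..} y", simplified])
  moreover have "(\<integral>\<^sup>+u. indicator {\<theta>..} u * indicator {u<..} y \<partial>lborel) = ennreal (y - \<theta>)" for y
  proof -
    have "(\<integral>\<^sup>+u. indicator {\<theta>..} u * indicator {u<..} y \<partial>lborel) = (\<integral>\<^sup>+u. indicator {\<theta>..<y} u \<partial>lborel)"
      by (intro nn_integral_cong) (auto simp: indicator_def)
    then show ?thesis
      by (cases "\<theta> \<le> y") (auto simp: ennreal_neg)
  qed
  ultimately show ?thesis
    by (simp add: nn_integral_cmult sets_eq)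
qed

lemma nn_integral_neg_part_layer_cake:
  fixes M :: "real measure"
  assumes "sigma_finite_measure M" and sets_eq [measurable_cong]: "sets M = sets borel"
    and AE_nonneg: "AE y in M. 0 \<le> y"
  shows "(\<integral>\<^sup>+y. ennreal (\<theta> - y) \<partial>M) = (\<integral>\<^sup>+u. indicator {0..\<theta>} u * emeasure M {..u} \<partial>lborel)"
proof -
  interpret sigma_finite_measure M by fact
  interpret P: pair_sigma_finite lborel M ..
  have inner: "(\<integral>\<^sup>+u. indicator {0..\<theta>} u * indicator {..u} y \<partial>lborel) = ennreal (\<theta> - y)" if "0 \<le> y" for y
  proof -
    have "(\<integral>\<^sup>+u. indicator {0..\<theta>} u * indicator {..u} y \<partial>lborel) = (\<integral>\<^sup>+u. indicator {y..\<theta>} u \<partial>lborel)"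
      using that by (intro nn_integral_cong) (auto simp: indicator_def)
    then show ?thesis
      by (cases "y \<le> \<theta>") (auto simp: ennreal_neg)
  qed
  have "(\<lambda>(u, y). indicator {0..\<theta>} u * indicator {..u} y :: ennreal) \<in> borel_measurable (lborel \<Otimes>\<^sub>M M)"
    by (simp add: indicator_def case_prod_beta')
  then have "(\<integral>\<^sup>+u. \<integral>\<^sup>+y. indicator {0..\<theta>} u * indicator {..u} y \<partial>M \<partial>lborel)
      = (\<integral>\<^sup>+y. \<integral>\<^sup>+u. indicator {0..\<theta>} u * indicator {..u} y \<partial>lborel \<partial>M)"
    by (rule P.Fubini[symmetric, where f = "\<lambda>(u, y). indicator {0..\<theta>} u * indicator {..u} y", simplified])
  also have "\<dots> = (\<integral>\<^sup>+y. ennreal (\<theta> - y) \<partial>M)"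
    using AE_nonneg by (intro nn_integral_cong_AE) (auto elim!: eventually_mono simp: inner)
  finally show ?thesis
    by (simp add: nn_integral_cmult sets_eq)
qed

locale nonneg_real_distribution = prob_space M for M :: "real measure" +
  fixes mean :: real
  assumes sets_eq [measurable_cong]: "sets M = sets borel"
    and AE_nonneg: "AE y in M. 0 \<le> y"
    and nn_integral_id: "(\<integral>\<^sup>+y. ennreal y \<partial>M) = ennreal mean"
    and mean_nonneg: "0 \<le> mean"
begin

lemma nn_integral_pos_part_eq:
  assumes "0 \<le> \<theta>"
  shows "(\<integral>\<^sup>+y. ennreal (y - \<theta>) \<partial>M) = ennreal (upper_partial_moment M \<theta>)"
proof -
  have "(\<integral>\<^sup>+y. ennreal (y - \<theta>) \<partial>M) \<le> (\<integral>\<^sup>+y. ennreal y \<partial>M)"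
    using assms by (intro nn_integral_mono ennreal_leI) auto
  then have "(\<integral>\<^sup>+y. ennreal (y - \<theta>) \<partial>M) < top"
    using ennreal_less_top order.strict_trans1 by (metis nn_integral_id)
  then show ?thesis
    by (simp add: upper_partial_moment_def ennreal_enn2real_if)
qed

lemma nn_integral_neg_part_eq:
  "(\<integral>\<^sup>+y. ennreal (\<theta> - y) \<partial>M) = ennreal (lower_partial_moment M \<theta>)"
proof -
  have "(\<integral>\<^sup>+y. ennreal (\<theta> - y) \<partial>M) \<le> (\<integral>\<^sup>+y. ennreal \<theta> \<partial>M)"
    using AE_nonneg by (intro nn_integral_mono_AE) (auto elim!: eventually_mono intro: ennreal_leI)
  then have "(\<integral>\<^sup>+y. ennreal (\<theta> - y) \<partial>M) < top"
    using ennreal_less_top order.strict_trans1 by (metis nn_integral_const emeasure_space_1 mult_1_right)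
  then show ?thesis
    by (simp add: lower_partial_moment_def ennreal_enn2real_if)
qed

lemma upper_partial_moment_le_mean:
  assumes "0 \<le> \<theta>"
  shows "upper_partial_moment M \<theta> \<le> mean"
proof -
  have "(\<integral>\<^sup>+y. ennreal (y - \<theta>) \<partial>M) \<le> (\<integral>\<^sup>+y. ennreal y \<partial>M)"
    using assms by (intro nn_integral_mono ennreal_leI) auto
  then have "ennreal (upper_partial_moment M \<theta>) \<le> ennreal mean"
    using assms by (simp add: nn_integral_pos_part_eq nn_integral_id)
  then show ?thesis
    using mean_nonneg by simp
qed

text \<open>Put-call parity: \<open>(y - \<theta>)\<^sup>+ + \<theta> = (\<theta> - y)\<^sup>+ + y\<close> for \<open>y \<ge> 0\<close>.\<close>

lemma upper_partial_moment_parity: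
  assumes "0 \<le> \<theta>"
  shows "upper_partial_moment M \<theta> + \<theta> = lower_partial_moment M \<theta> + mean"
proof -
  have "ennreal (y - \<theta>) + ennreal \<theta> = ennreal (\<theta> - y) + ennreal y" if "0 \<le> y" for y
    using assms that by (cases "\<theta> \<le> y") (simp_all add: ennreal_neg ennreal_plus[symmetric] del: ennreal_plus)
  then have "(\<integral>\<^sup>+y. ennreal (y - \<theta>) + ennreal \<theta> \<partial>M) = (\<integral>\<^sup>+y. ennreal (\<theta> - y) + ennreal y \<partial>M)"
    using AE_nonneg by (intro nn_integral_cong_AE) (auto elim!: eventually_mono)
  then have "ennreal (upper_partial_moment M \<theta>) + ennreal \<theta> = ennreal (lower_partial_moment M \<theta>) + ennreal mean"
    using assms
    by (simp add: nn_integral_add emeasure_space_1 nn_integral_pos_part_eq nn_integral_neg_part_eq nn_integral_id)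
  then show ?thesis
    using assms mean_nonneg by (simp add: ennreal_plus[symmetric] del: ennreal_plus)
qed

lemma lower_partial_moment_mono:
  assumes "\<theta>1 \<le> \<theta>2"
  shows "lower_partial_moment M \<theta>1 \<le> lower_partial_moment M \<theta>2"
proof -
  have "(\<integral>\<^sup>+y. ennreal (\<theta>1 - y) \<partial>M) \<le> (\<integral>\<^sup>+y. ennreal (\<theta>2 - y) \<partial>M)"
    using assms by (intro nn_integral_mono ennreal_leI) auto
  then show ?thesis
    by (simp add: nn_integral_neg_part_eq)
qed

lemma upper_partial_moment_antimono:
  assumes "0 \<le> \<theta>1" "\<theta>1 \<le> \<theta>2"
  shows "upper_partial_moment M \<theta>2 \<le> upper_partial_moment M \<theta>1"
proof -
  have "(\<integral>\<^sup>+y. ennreal (y - \<theta>2) \<partial>M) \<le> (\<integral>\<^sup>+y. ennreal (y - \<theta>1) \<partial>M)"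
    using assms by (intro nn_integral_mono ennreal_leI) auto
  then show ?thesis
    using assms by (simp add: nn_integral_pos_part_eq)
qed

end

lemma nonneg_real_distribution_Gmeas:
  assumes "0 < Rv" "0 \<le> cr" "0 \<le> x"
  shows "nonneg_real_distribution (Gmeas cr Rv x) (cr * x + Rv)"
proof -
  interpret prob_space "Gmeas cr Rv x"
    using assms(1) by (rule prob_space_Gmeas)
  show ?thesis
    using assms by unfold_locales (simp_all add: AE_Gmeas_nonneg nn_integral_Gmeas_id)
qed

lemma Gcdf_measurable [measurable]:
  assumes "0 < Rv" shows "(\<lambda>u. Gcdf cr Rv u x) \<in> borel_measurable borel"
proof (rule borel_measurable_mono, rule monoI)
  interpret prob_space "Gmeas cr Rv x"
    using assms by (rule prob_space_Gmeas)
  show "Gcdf cr Rv u x \<le> Gcdf cr Rv v x" if "u \<le> v" for u v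
    unfolding Gcdf_def using that by (intro finite_measure_mono) auto
qed

lemma ennreal_Gcdf:
  assumes "0 < Rv"
  shows "ennreal (Gcdf cr Rv u x) = emeasure (Gmeas cr Rv x) {..u}"
proof -
  interpret prob_space "Gmeas cr Rv x"
    using assms by (rule prob_space_Gmeas)
  show ?thesis
    by (simp add: Gcdf_def emeasure_eq_measure)
qed

lemma ennreal_one_minus_Gcdf:
  assumes "0 < Rv"
  shows "ennreal (1 - Gcdf cr Rv u x) = emeasure (Gmeas cr Rv x) {u<..}"
proof -
  interpret prob_space "Gmeas cr Rv x"
    using assms by (rule prob_space_Gmeas)
  have "1 - Gcdf cr Rv u x = measure (Gmeas cr Rv x) (space (Gmeas cr Rv x) - {..u})"
    unfolding Gcdf_def by (subst prob_compl) auto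
  also have "space (Gmeas cr Rv x) - {..u} = {u<..}"
    by (auto simp: Gmeas_def)
  finally show ?thesis
    by (simp add: emeasure_eq_measure)
qed

lemma Gcdf_bounds: "0 < Rv \<Longrightarrow> 0 \<le> Gcdf cr Rv u x \<and> Gcdf cr Rv u x \<le> 1"
  using prob_space.prob_le_1[OF prob_space_Gmeas] by (simp add: Gcdf_def)

lemma set_integral_one_minus_Gcdf:
  assumes "0 < Rv"
  shows "(LINT u:{\<theta>..}|lborel. 1 - Gcdf cr Rv u x) = upper_partial_moment (Gmeas cr Rv x) \<theta>"
proof -
  interpret prob_space "Gmeas cr Rv x"
    using assms by (rule prob_space_Gmeas)
  have "(LINT u:{\<theta>..}|lborel. 1 - Gcdf cr Rv u x)
      = enn2real (\<integral>\<^sup>+u. ennreal (indicator {\<theta>..} u * (1 - Gcdf cr Rv u x)) \<partial>lborel)"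
    unfolding set_lebesgue_integral_def scaleR_conv_of_real of_real_eq_id id_apply
    using assms Gcdf_bounds by (intro integral_eq_nn_integral) auto
  also have "(\<integral>\<^sup>+u. ennreal (indicator {\<theta>..} u * (1 - Gcdf cr Rv u x)) \<partial>lborel)
      = (\<integral>\<^sup>+y. ennreal (y - \<theta>) \<partial>Gmeas cr Rv x)"
    using assms Gcdf_bounds
    by (simp add: nn_integral_pos_part_layer_cake sigma_finite_measure ennreal_one_minus_Gcdf
        ennreal_mult ennreal_indicator)
  finally show ?thesis
    by (simp add: upper_partial_moment_def)
qed

lemma set_integral_Gcdf:
  assumes "0 < Rv"
  shows "(LINT u:{0..\<theta>}|lborel. Gcdf cr Rv u x) = lower_partial_moment (Gmeas cr Rv x) \<theta>"
proof -
  interpret prob_space "Gmeas cr Rv x"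
    using assms by (rule prob_space_Gmeas)
  have "(LINT u:{0..\<theta>}|lborel. Gcdf cr Rv u x)
      = enn2real (\<integral>\<^sup>+u. ennreal (indicator {0..\<theta>} u * Gcdf cr Rv u x) \<partial>lborel)"
    unfolding set_lebesgue_integral_def scaleR_conv_of_real of_real_eq_id id_apply
    using assms Gcdf_bounds by (intro integral_eq_nn_integral) auto
  also have "(\<integral>\<^sup>+u. ennreal (indicator {0..\<theta>} u * Gcdf cr Rv u x) \<partial>lborel)
      = (\<integral>\<^sup>+y. ennreal (\<theta> - y) \<partial>Gmeas cr Rv x)"
    using assms Gcdf_bounds
    by (simp add: nn_integral_neg_part_layer_cake sigma_finite_measure AE_Gmeas_nonneg ennreal_Gcdf
        ennreal_mult ennreal_indicator)
  finally show ?thesis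
    by (simp add: lower_partial_moment_def)
qed

lemma Jfun_eq_upper_partial_moment:
  "Jfun cr Rv tau \<theta> x = (1 - tau) * upper_partial_moment (Gmeas cr Rv x) \<theta> - \<theta> * tau"
proof -
  have "(\<integral>y\<in>{\<theta><..}. (y - \<theta>) \<partial>Gmeas cr Rv x)
      = enn2real (\<integral>\<^sup>+y. ennreal (indicator {\<theta><..} y * (y - \<theta>)) \<partial>Gmeas cr Rv x)"
    unfolding set_lebesgue_integral_def scaleR_conv_of_real of_real_eq_id id_apply
    by (intro integral_eq_nn_integral) (auto simp: indicator_def)
  also have "(\<integral>\<^sup>+y. ennreal (indicator {\<theta><..} y * (y - \<theta>)) \<partial>Gmeas cr Rv x)
      = (\<integral>\<^sup>+y. ennreal (y - \<theta>) \<partial>Gmeas cr Rv x)"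
    by (intro nn_integral_cong) (auto simp: indicator_def ennreal_neg)
  finally show ?thesis
    by (simp add: Jfun_def upper_partial_moment_def)
qed

lemma upper_partial_moment_Gmeas_strict_mono:
  assumes "0 < Rv" "0 < cr" "0 \<le> x1" "x1 < x2" "0 \<le> \<theta>"
  shows "upper_partial_moment (Gmeas cr Rv x1) \<theta> < upper_partial_moment (Gmeas cr Rv x2) \<theta>"
proof -
  let ?f = "\<lambda>x u. indicator {\<theta>..} u * ennreal (1 - Gcdf cr Rv u x)"
  have tail: "(\<integral>\<^sup>+u. ?f x u \<partial>lborel) = ennreal (upper_partial_moment (Gmeas cr Rv x) \<theta>)" if "0 \<le> x" for x
  proof -
    interpret nonneg_real_distribution "Gmeas cr Rv x" "cr * x + Rv"
      using assms that by (intro nonneg_real_distribution_Gmeas) auto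
    show ?thesis
      using assms by (simp add: nn_integral_pos_part_layer_cake[OF sigma_finite_measure sets_eq]
          nn_integral_pos_part_eq[symmetric] ennreal_one_minus_Gcdf)
  qed
  have "(\<integral>\<^sup>+u. ?f x1 u \<partial>lborel) < (\<integral>\<^sup>+u. ?f x2 u \<partial>lborel)"
  proof (rule nn_integral_less)
    show "(\<integral>\<^sup>+u. ?f x1 u \<partial>lborel) \<noteq> \<infinity>"
      using tail[OF assms(3)] by simp
    show "AE u in lborel. ?f x1 u \<le> ?f x2 u"
      using assms Gcdf_antimono(1)[of Rv cr x1 x2]
      by (intro AE_I2 mult_left_mono ennreal_leI) auto
    show "\<not> (AE u in lborel. ?f x2 u \<le> ?f x1 u)"
    proof (rule not_AE_lborel_interval)
      fix u assume "\<theta> < u" "u < \<theta> + 1"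
      moreover have "Gcdf cr Rv u x2 < Gcdf cr Rv u x1" "Gcdf cr Rv u x1 \<le> 1"
        using assms \<open>\<theta> < u\<close> Gcdf_antimono(2)[of Rv cr x1 x2 u] Gcdf_bounds[of Rv cr u x1] by auto
      ultimately show "\<not> ?f x2 u \<le> ?f x1 u"
        by (simp add: indicator_def not_le ennreal_lessI)
    qed simp
  qed (use assms in auto)
  then show ?thesis
    using assms tail[of x1] tail[of x2] by (simp add: ennreal_less_iff)
qed

lemma lower_partial_moment_Gmeas_antimono:
  assumes "0 < Rv" "0 < cr" "0 \<le> x1" "x1 \<le> x2"
  shows "lower_partial_moment (Gmeas cr Rv x2) \<theta> \<le> lower_partial_moment (Gmeas cr Rv x1) \<theta>"
proof -
  have "(\<integral>\<^sup>+u. indicator {0..\<theta>} u * ennreal (Gcdf cr Rv u x2) \<partial>lborel)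
      \<le> (\<integral>\<^sup>+u. indicator {0..\<theta>} u * ennreal (Gcdf cr Rv u x1) \<partial>lborel)"
    using Gcdf_antimono(1)[OF assms] Gcdf_bounds[OF assms(1)]
    by (intro nn_integral_mono mult_left_mono ennreal_leI) auto
  moreover have "(\<integral>\<^sup>+u. indicator {0..\<theta>} u * ennreal (Gcdf cr Rv u x) \<partial>lborel)
      = ennreal (lower_partial_moment (Gmeas cr Rv x) \<theta>)" if "0 \<le> x" for x
  proof -
    interpret nonneg_real_distribution "Gmeas cr Rv x" "cr * x + Rv"
      using assms that by (intro nonneg_real_distribution_Gmeas) auto
    show ?thesis
      using assms by (simp add: nn_integral_neg_part_layer_cake[OF sigma_finite_measure sets_eq AE_nonneg]
          nn_integral_neg_part_eq[symmetric] ennreal_Gcdf)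
  qed
  ultimately show ?thesis
    using assms by simp
qed

lemma upper_partial_moment_Gmeas_measurable [measurable]:
  assumes "0 < Rv"
  shows "(\<lambda>x. upper_partial_moment (Gmeas cr Rv x) \<theta>) \<in> borel_measurable borel"
  unfolding upper_partial_moment_def using assms by (subst nn_integral_Gmeas) auto

section \<open>The system of equations\<close>

lemma Fdens_nonneg: "0 < m \<Longrightarrow> 0 \<le> Fdens m u"
  by (simp add: Fdens_def exponential_density_def)

lemma Fdens_eq_0: "u < 0 \<Longrightarrow> Fdens m u = 0"
  by (simp add: Fdens_def exponential_density_def)

lemma Fdens_measurable [measurable]: "Fdens m \<in> borel_measurable borel"
  unfolding Fdens_def[abs_def] by simp

lemma integrable_Fdens_mult_power:
  assumes "0 < m"
  shows "integrable lborel (\<lambda>u. Fdens m u * u ^ k)"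
proof (rule integrableI_nonneg)
  show "AE u in lborel. 0 \<le> Fdens m u * u ^ k"
    using assms by (intro AE_I2) (auto simp: Fdens_def exponential_density_def)
  have "(\<integral>\<^sup>+u. ennreal (Fdens m u * u ^ k) \<partial>lborel) = fact (0 + k) / (fact 0 * (1 / m) ^ k)"
    unfolding Fdens_def using assms by (intro nn_integral_erlang_ith_moment) simp
  then show "(\<integral>\<^sup>+u. ennreal (Fdens m u * u ^ k) \<partial>lborel) < \<infinity>"
    by simp
qed simp

lemma integrable_excess_Fdens:
  assumes "0 < m"
  shows "integrable lborel (\<lambda>u. (u - \<theta>) * Fdens m u)"
proof -
  have "integrable lborel (\<lambda>u. Fdens m u * u ^ 1 - \<theta> * (Fdens m u * u ^ 0))"
    using assms by (intro Bochner_Integration.integrable_diff integrable_mult_right integrable_Fdens_mult_power)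
  then show ?thesis
    by (simp add: algebra_simps)
qed

lemma interval_integral_eq_diff_tails:
  fixes g :: "real \<Rightarrow> real"
  assumes "integrable lborel g"
  shows "(LBINT u = ereal a..ereal b. g u) = (LBINT u:{a..}. g u) - (LBINT u:{b..}. g u)"
proof -
  have [measurable]: "g \<in> borel_measurable borel"
    using borel_measurable_integrable[OF assms] by simp
  have tail: "(LBINT u:{c<..}. g u) = (LBINT u:{c..}. g u)" for c
    using AE_lborel_singleton[of c]
    by (intro set_integral_cong_set) (auto simp: set_borel_measurable_def elim!: eventually_mono)
  have "interval_lebesgue_integrable lborel c d g" for c d
    using integrable_real_mult_indicator[OF _ assms]
    by (auto simp: interval_lebesgue_integrable_def set_integrable_def mult.commute)
  then have "(LBINT u = ereal a..ereal b. g u) + (LBINT u = ereal b..\<infinity>. g u) = (LBINT u = ereal a..\<infinity>. g u)"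
    by (intro interval_integral_sum)
  then show ?thesis
    by (simp add: interval_integral_to_infinity_eq tail)
qed

locale two_level_rate_model =
  fixes ps tau cr Rv m :: real
  assumes ps_pos: "0 < ps" and tau_pos: "0 < tau" and tau_less_1: "tau < 1"
    and cr_pos: "0 < cr" and Rv_pos: "0 < Rv" and m_pos: "0 < m"
begin

abbreviation upper :: "real \<Rightarrow> real \<Rightarrow> real" where
  "upper x \<theta> \<equiv> upper_partial_moment (Gmeas cr Rv x) \<theta>"

abbreviation lower :: "real \<Rightarrow> real \<Rightarrow> real" where
  "lower x \<theta> \<equiv> lower_partial_moment (Gmeas cr Rv x) \<theta>"

abbreviation J :: "real \<Rightarrow> real \<Rightarrow> real" where
  "J \<theta> u \<equiv> Jfun cr Rv tau \<theta> u"

abbreviation surplus :: "real \<Rightarrow> real \<Rightarrow> real" where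
  "surplus \<theta> u \<equiv> u - \<theta> - J \<theta> u"

lemma Gmeas_distribution: "0 \<le> x \<Longrightarrow> nonneg_real_distribution (Gmeas cr Rv x) (cr * x + Rv)"
  using Rv_pos cr_pos by (intro nonneg_real_distribution_Gmeas) auto

lemma surplus_eq:
  assumes "0 \<le> u" "0 \<le> \<theta>"
  shows "surplus \<theta> u = (1 - (1 - tau) * cr) * u - (1 - tau) * (Rv + lower u \<theta>)"
proof -
  have "(1 - tau) * (upper u \<theta> + \<theta>) = (1 - tau) * (lower u \<theta> + (cr * u + Rv))"
    using nonneg_real_distribution.upper_partial_moment_parity[OF Gmeas_distribution[OF assms(1)] assms(2)]
    by simp
  then show ?thesis
    by (simp add: Jfun_eq_upper_partial_moment algebra_simps)
qed

lemma J_strict_mono: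
  assumes "0 \<le> \<theta>"
  shows "strict_mono_on {0..} (J \<theta>)"
  using upper_partial_moment_Gmeas_strict_mono[OF Rv_pos cr_pos _ _ assms] tau_less_1
  by (intro strict_mono_onI) (simp add: Jfun_eq_upper_partial_moment)

lemma abs_J_le:
  assumes "0 \<le> u" "0 \<le> \<theta>"
  shows "\<bar>J \<theta> u\<bar> \<le> cr * u + Rv + \<theta>"
proof -
  interpret nonneg_real_distribution "Gmeas cr Rv u" "cr * u + Rv"
    using assms(1) by (rule Gmeas_distribution)
  have "(1 - tau) * upper u \<theta> \<le> upper u \<theta>"
    using tau_pos tau_less_1 by (intro mult_left_le_one_le) auto
  also have "\<dots> \<le> cr * u + Rv"
    using assms(2) by (rule upper_partial_moment_le_mean)
  finally have "(1 - tau) * upper u \<theta> \<le> cr * u + Rv" .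
  moreover have "0 \<le> (1 - tau) * upper u \<theta>" "0 \<le> \<theta> * tau" "\<theta> * tau \<le> \<theta>"
    using assms tau_pos tau_less_1 by (simp_all add: mult_left_le)
  ultimately show ?thesis
    by (simp add: Jfun_eq_upper_partial_moment abs_le_iff)
qed

lemma integrable_J_Fdens:
  assumes "0 \<le> \<theta>"
  shows "integrable lborel (\<lambda>u. J \<theta> u * Fdens m u)"
proof (rule Bochner_Integration.integrable_bound)
  let ?F = "Fdens m"
  show "integrable lborel (\<lambda>u. cr * (?F u * u ^ 1) + (Rv + \<theta>) * (?F u * u ^ 0))"
    using m_pos by (intro Bochner_Integration.integrable_add integrable_mult_right integrable_Fdens_mult_power)
  show "(\<lambda>u. J \<theta> u * ?F u) \<in> borel_measurable lborel"
    using Rv_pos by (simp add: Jfun_eq_upper_partial_moment)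
  show "AE u in lborel. norm (J \<theta> u * ?F u) \<le> norm (cr * (?F u * u ^ 1) + (Rv + \<theta>) * (?F u * u ^ 0))"
  proof (intro AE_I2)
    fix u :: real
    show "norm (J \<theta> u * ?F u) \<le> norm (cr * (?F u * u ^ 1) + (Rv + \<theta>) * (?F u * u ^ 0))"
    proof (cases "0 \<le> u")
      case True
      have "\<bar>J \<theta> u\<bar> * ?F u \<le> (cr * u + Rv + \<theta>) * ?F u"
        using abs_J_le[OF True assms] Fdens_nonneg[OF m_pos] by (rule mult_right_mono)
      moreover have "0 \<le> (cr * u + Rv + \<theta>) * ?F u"
        using True cr_pos Rv_pos assms Fdens_nonneg[OF m_pos] by simp
      ultimately show ?thesis
        using Fdens_nonneg[OF m_pos, of u] by (simp add: abs_mult algebra_simps)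
    qed (simp add: Fdens_eq_0)
  qed
qed

abbreviation solution :: "real \<Rightarrow> real \<Rightarrow> real \<Rightarrow> bool" where
  "solution xJ xq \<theta> \<equiv> is_solution ps tau cr Rv m xJ xq \<theta>"

lemma solution_J_zero:
  assumes "solution xJ xq \<theta>"
  shows "J \<theta> xJ = 0"
proof -
  have "upper xJ \<theta> = \<theta> * tau / (1 - tau)"
    using assms Rv_pos by (simp add: is_solution_def set_integral_one_minus_Gcdf)
  then show ?thesis
    using tau_less_1 by (simp add: Jfun_eq_upper_partial_moment field_simps)
qed

lemma solution_surplus_zero:
  assumes "solution xJ xq \<theta>"
  shows "surplus \<theta> xq = 0"
proof -
  have xq: "0 \<le> xq" and \<theta>: "0 \<le> \<theta>"
    using assms by (auto simp: is_solution_def)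
  have "(cr * (1 - tau) - 1) * xq + (1 - tau) * (Rv + lower xq \<theta>) = 0"
    using assms Rv_pos by (simp add: is_solution_def set_integral_Gcdf)
  moreover have "surplus \<theta> xq = - ((cr * (1 - tau) - 1) * xq + (1 - tau) * (Rv + lower xq \<theta>))"
    using surplus_eq[OF xq \<theta>] by (simp add: algebra_simps)
  ultimately show ?thesis
    by simp
qed

lemma solution_surplus_strict_mono:
  assumes "solution xJ xq \<theta>"
  shows "strict_mono_on {0..} (surplus \<theta>)"
proof -
  have xq: "0 \<le> xq" and \<theta>: "0 < \<theta>"
    using assms by (auto simp: is_solution_def)
  have "0 < (1 - tau) * (Rv + lower xq \<theta>)"
    using Rv_pos tau_less_1 by (intro mult_pos_pos add_pos_nonneg) auto
  then have "0 < (1 - (1 - tau) * cr) * xq"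
    using solution_surplus_zero[OF assms] surplus_eq[OF xq] \<theta> by simp
  then have k: "0 < 1 - (1 - tau) * cr"
    using xq by (simp add: zero_less_mult_iff)
  show ?thesis
  proof (rule strict_mono_onI)
    fix u v :: real assume "u \<in> {0..}" "v \<in> {0..}" "u < v"
    moreover have "lower v \<theta> \<le> lower u \<theta>"
      using calculation Rv_pos cr_pos by (intro lower_partial_moment_Gmeas_antimono) auto
    moreover have "(1 - (1 - tau) * cr) * u < (1 - (1 - tau) * cr) * v"
      using k \<open>u < v\<close> by simp
    moreover have "(1 - tau) * lower v \<theta> \<le> (1 - tau) * lower u \<theta>"
      using calculation tau_less_1 by (intro mult_left_mono) auto
    ultimately show "surplus \<theta> u < surplus \<theta> v"
      using \<theta> surplus_eq[of u \<theta>] surplus_eq[of v \<theta>] by (simp add: algebra_simps)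
  qed
qed

lemma solution_J_nonneg_iff:
  assumes "solution xJ xq \<theta>" "0 \<le> u"
  shows "0 \<le> J \<theta> u \<longleftrightarrow> xJ \<le> u"
  using assms strict_mono_on_less_eq[OF J_strict_mono, of \<theta> xJ u] solution_J_zero[OF assms(1)]
  by (simp add: is_solution_def)

lemma solution_surplus_nonneg_iff:
  assumes "solution xJ xq \<theta>" "0 \<le> u"
  shows "0 \<le> surplus \<theta> u \<longleftrightarrow> xq \<le> u"
  using assms strict_mono_on_less_eq[OF solution_surplus_strict_mono[OF assms(1)], of xq u]
    solution_surplus_zero[OF assms(1)]
  by (simp add: is_solution_def)

text \<open>At a solution, \<open>J\<close> changes sign at \<open>xJ\<close> and the surplus at \<open>xq\<close>; this turns the left-hand
  side of the third equation into the integral of the following function, which no longer mentions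
  \<open>xJ\<close> and \<open>xq\<close>.\<close>

definition eq3_integrand :: "real \<Rightarrow> real \<Rightarrow> real" where
  "eq3_integrand \<theta> u = (max (J \<theta> u) 0 + max (surplus \<theta> u) 0) * Fdens m u"

lemma solution_eq3_integrand:
  assumes "solution xJ xq \<theta>"
  shows "integrable lborel (eq3_integrand \<theta>)" and "(\<integral>u. eq3_integrand \<theta> u \<partial>lborel) = \<theta> * tau / ps"
proof -
  define j where "j u = J \<theta> u * Fdens m u" for u
  define d where "d u = (u - \<theta>) * Fdens m u" for u
  let ?f = "\<lambda>u. indicator {xJ..} u * j u - indicator {xq..} u * j u + indicator {xq..} u * d u"
  have \<theta>: "0 \<le> \<theta>"
    using assms by (simp add: is_solution_def)
  have j: "integrable lborel j" and d: "integrable lborel d"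
    unfolding j_def d_def using \<theta> m_pos by (auto intro: integrable_J_Fdens integrable_excess_Fdens)
  have tail: "integrable lborel (\<lambda>u. indicator {c..} u * g u)" if "integrable lborel g" for c and g :: "real \<Rightarrow> real"
    using integrable_real_mult_indicator[OF _ that, of "{c..}"] by (simp add: mult.commute)
  have f_eq: "?f u = eq3_integrand \<theta> u" for u
  proof (cases "0 \<le> u")
    case True
    have "max (J \<theta> u) 0 = (if xJ \<le> u then J \<theta> u else 0)"
      using solution_J_nonneg_iff[OF assms True] by auto
    moreover have "max (surplus \<theta> u) 0 = (if xq \<le> u then surplus \<theta> u else 0)"
      using solution_surplus_nonneg_iff[OF assms True] by auto
    ultimately show ?thesis
      by (simp add: j_def d_def eq3_integrand_def algebra_simps split: split_indicator)
  qed (simp add: j_def d_def eq3_integrand_def Fdens_eq_0)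
  have "integrable lborel ?f"
    using tail[OF j] tail[OF d] by (intro Bochner_Integration.integrable_add Bochner_Integration.integrable_diff) auto
  then show "integrable lborel (eq3_integrand \<theta>)"
    by (simp add: f_eq)
  have "\<theta> * tau / ps = (LBINT u = ereal xJ..ereal xq. j u) + (LBINT u:{xq..}. d u)"
    using assms by (simp add: is_solution_def j_def d_def)
  also have "\<dots> = (\<integral>u. ?f u \<partial>lborel)"
    using tail[OF j] tail[OF d]
    by (simp add: interval_integral_eq_diff_tails[OF j] set_lebesgue_integral_def)
  finally show "(\<integral>u. eq3_integrand \<theta> u \<partial>lborel) = \<theta> * tau / ps"
    by (simp add: f_eq)
qed

lemma eq3_integrand_antimono:
  assumes "0 \<le> \<theta>1" "\<theta>1 \<le> \<theta>2"
  shows "eq3_integrand \<theta>2 u \<le> eq3_integrand \<theta>1 u"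
proof (cases "0 \<le> u")
  case True
  interpret nonneg_real_distribution "Gmeas cr Rv u" "cr * u + Rv"
    using True by (rule Gmeas_distribution)
  have "upper u \<theta>2 \<le> upper u \<theta>1"
    using assms by (rule upper_partial_moment_antimono)
  then have "J \<theta>2 u \<le> J \<theta>1 u"
    using assms tau_pos tau_less_1
    by (simp add: Jfun_eq_upper_partial_moment mult_left_mono mult_right_mono diff_mono)
  have "\<theta>1 + upper u \<theta>1 \<le> \<theta>2 + upper u \<theta>2"
    using assms upper_partial_moment_parity[of \<theta>1] upper_partial_moment_parity[of \<theta>2]
      lower_partial_moment_mono[OF assms(2)] by linarith
  then have "surplus \<theta>2 u \<le> surplus \<theta>1 u"
    using tau_less_1 mult_left_mono[of "\<theta>1 + upper u \<theta>1" "\<theta>2 + upper u \<theta>2" "1 - tau"]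
    by (simp add: Jfun_eq_upper_partial_moment algebra_simps)
  show ?thesis
    unfolding eq3_integrand_def using \<open>J \<theta>2 u \<le> J \<theta>1 u\<close> \<open>surplus \<theta>2 u \<le> surplus \<theta>1 u\<close>
    by (intro mult_right_mono add_mono max.mono Fdens_nonneg m_pos) auto
qed (simp add: eq3_integrand_def Fdens_eq_0)

lemma solution_theta_unique:
  assumes "solution xJ xq \<theta>" "solution xJ' xq' \<theta>'"
  shows "\<theta> = \<theta>'"
proof -
  have "\<not> \<theta>1 < \<theta>2" if S1: "solution a b \<theta>1" and S2: "solution c d \<theta>2" for a b c d \<theta>1 \<theta>2
  proof
    assume "\<theta>1 < \<theta>2"
    moreover have "0 \<le> \<theta>1"
      using S1 by (simp add: is_solution_def)
    ultimately have "(\<integral>u. eq3_integrand \<theta>2 u \<partial>lborel) \<le> (\<integral>u. eq3_integrand \<theta>1 u \<partial>lborel)"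
      using solution_eq3_integrand(1)[OF S1] solution_eq3_integrand(1)[OF S2]
      by (intro integral_mono eq3_integrand_antimono) auto
    then have "\<theta>2 * tau / ps \<le> \<theta>1 * tau / ps"
      by (simp add: solution_eq3_integrand(2)[OF S1] solution_eq3_integrand(2)[OF S2])
    with \<open>\<theta>1 < \<theta>2\<close> show False
      using ps_pos tau_pos by (simp add: divide_le_cancel)
  qed
  then show ?thesis
    using assms by (meson linorder_neqE_linordered_idom)
qed

lemma solution_unique:
  assumes "solution xJ xq \<theta>" "solution xJ' xq' \<theta>'"
  shows "(xJ, xq, \<theta>) = (xJ', xq', \<theta>')"
proof -
  have \<theta>: "\<theta>' = \<theta>"
    using solution_theta_unique[OF assms] by simp
  have nonneg: "0 \<le> \<theta>" "0 \<le> xJ" "0 \<le> xJ'" "0 \<le> xq" "0 \<le> xq'"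
    using assms by (auto simp: is_solution_def)
  have "xJ = xJ'"
    using strict_mono_on_eq[OF J_strict_mono[OF nonneg(1)], of xJ xJ'] nonneg
      solution_J_zero[OF assms(1)] solution_J_zero[OF assms(2)] \<theta> by simp
  moreover have "xq = xq'"
    using strict_mono_on_eq[OF solution_surplus_strict_mono[OF assms(1)], of xq xq'] nonneg
      solution_surplus_zero[OF assms(1)] solution_surplus_zero[OF assms(2)] \<theta> by simp
  ultimately show ?thesis
    using \<theta> by simp
qed

end

theorem lemma3:
  fixes ps tau cr Rv m :: real
  assumes "0 < ps" "ps < 1" "0 < tau" "tau < 1" "0 < cr" "0 < Rv" "0 < m"
  shows "\<forall>xJ xq theta xJ' xq' theta'.
           is_solution ps tau cr Rv m xJ xq theta \<and> is_solution ps tau cr Rv m xJ' xq' theta'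
           \<longrightarrow> (xJ, xq, theta) = (xJ', xq', theta')"
proof -
  interpret two_level_rate_model ps tau cr Rv m
    using assms by unfold_locales
  show ?thesis
    using solution_unique by blast
qed

end
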